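(* Let $R$ be a real $n\times n$ payoff matrix, let $S,F$ be $n\times n$ row-stochastic matrices, and for $\lambda\in[0,1]$ set $Q(\lambda)=(1-\lambda)S+\lambda F$, $R(\lambda)=Q(\lambda)RQ(\lambda)^T$ and $\tilde R(\lambda)=R(\lambda)-\mathbf d_{R(\lambda)}\mathbf u^T$, where $\mathbf d_{R(\lambda)}$ is the column vector of diagonal entries of $R(\lambda)$ and $\mathbf u$ is the all-ones column vector. Consider the replicator dynamics on the simplex $S^n=\{x\in\mathbb R^n: x_i\ge 0,\ \sum_i x_i=1\}$, $$\dot x_i=x_i\big((\tilde R(\lambda)x)_i-x^T\tilde R(\lambda)x\big),\quad i=1,\dots,n.$$ Let $i\neq j$ and suppose that, for $\lambda$ near a value $\lambda^c$, $\tilde{\mathbf x}=\alpha\mathbf e_i+(1-\alpha)\mathbf e_j$ with $\alpha\in(0,1)$ is a fixed point of these dynamics which is stable (all eigenvalues of the Jacobian at $\tilde{\mathbf x}$ have negative real parts) for $\lambda$ on one side of $\lambda^c$. Suppose that for some $k\neq i,j$ the function $$\phi_k(\lambda)=\mathbf e_k^T\tilde R(\lambda)\tilde{\mathbf x}-\tilde{\mathbf x}^T\tilde R(\lambda)\tilde{\mathbf x}$$ changes sign from $<0$ to $>0$ at $\lambda^c$. Then $\tilde{\mathbf x}$ changes its qualitative behavior at $\lambda^c$ and becomes unstable (after $\lambda$ crosses $\lambda^c$).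
   Context: $\mathbf e_1,\dots,\mathbf e_n$ denote the standard unit basis vectors of $\mathbb R^n$. $Q(\lambda)$ is the incompetence matrix: its $(i,j)$ entry is the probability that strategy $j$ is executed when strategy $i$ is selected; $\lambda$ is the incompetence (training) parameter. *)

theory Defs
  imports "HOL-Analysis.Analysis"
begin

definition row_stochastic :: "real^'n^'n \<Rightarrow> bool" where
  "row_stochastic S \<longleftrightarrow> (\<forall>a b. 0 \<le> S$a$b) \<and> (\<forall>a. (\<Sum>b\<in>UNIV. S$a$b) = 1)"

definition Qmat :: "real^'n^'n \<Rightarrow> real^'n^'n \<Rightarrow> real \<Rightarrow> real^'n^'n" where
  "Qmat S F l = (1 - l) *\<^sub>R S + l *\<^sub>R F"

definition Rlam :: "real^'n^'n \<Rightarrow> real^'n^'n \<Rightarrow> real^'n^'n \<Rightarrow> real \<Rightarrow> real^'n^'n" where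
  "Rlam R S F l = Qmat S F l ** R ** transpose (Qmat S F l)"

definition diag_vec :: "real^'n^'n \<Rightarrow> real^'n" where
  "diag_vec A = (\<chi> a. A$a$a)"

definition ones :: "real^'n" where
  "ones = (\<chi> a. 1)"

definition outer :: "real^'n \<Rightarrow> real^'n \<Rightarrow> real^'n^'n" where
  "outer d u = (\<chi> a b. d$a * u$b)"

definition Rtilde :: "real^'n^'n \<Rightarrow> real^'n^'n \<Rightarrow> real^'n^'n \<Rightarrow> real \<Rightarrow> real^'n^'n" where
  "Rtilde R S F l = Rlam R S F l - outer (diag_vec (Rlam R S F l)) ones"

definition replicator :: "real^'n^'n \<Rightarrow> real^'n \<Rightarrow> real^'n" where
  "replicator A x = (\<chi> a. x$a * ((A *v x)$a - x \<bullet> (A *v x)))"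

definition cmat :: "real^'n^'n \<Rightarrow> complex^'n^'n" where
  "cmat A = (\<chi> a b. complex_of_real (A$a$b))"

definition is_eigenvalue :: "real^'n^'n \<Rightarrow> complex \<Rightarrow> bool" where
  "is_eigenvalue A \<mu> \<longleftrightarrow> det (mat \<mu> - cmat A) = 0"

definition lin_stable :: "real^'n^'n \<Rightarrow> real^'n \<Rightarrow> bool" where
  "lin_stable A x \<longleftrightarrow> (\<forall>\<mu>. is_eigenvalue (jacobian (replicator A) (at x)) \<mu> \<longrightarrow> Re \<mu> < 0)"

definition phi :: "real^'n^'n \<Rightarrow> 'n \<Rightarrow> real^'n \<Rightarrow> real" where
  "phi A k x = axis k 1 \<bullet> (A *v x) - x \<bullet> (A *v x)"

end

theory Submission
  imports Defs
begin

text \<open>The face \<open>x\<^sub>k = 0\<close> of the simplex is invariant under the replicator dynamics, so at any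
  point of it the \<open>k\<close>-th row of the Jacobian is \<open>\<phi>\<^sub>k(x) e\<^sub>k\<^sup>T\<close>. Hence the invasion rate \<open>\<phi>\<^sub>k\<close> of
  the absent strategy \<open>k\<close> is an eigenvalue of the Jacobian at \<open>x\<close>, and the fixed point becomes
  unstable as soon as it turns positive.\<close>

definition replicator_deriv :: "real^'n^'n \<Rightarrow> real^'n \<Rightarrow> real^'n \<Rightarrow> real^'n" where
  "replicator_deriv A x h =
     (\<chi> a. h$a * ((A *v x)$a - x \<bullet> (A *v x)) + x$a * ((A *v h)$a - (x \<bullet> (A *v h) + h \<bullet> (A *v x))))"

lemma has_derivative_replicator_component:
  fixes A :: "real^'n^'n"
  shows "((\<lambda>y. replicator A y $ a) has_derivative (\<lambda>h. replicator_deriv A x h $ a)) (at x)"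
proof -
  have nth: "((\<lambda>y::real^'n. y$a) has_derivative (\<lambda>h. h$a)) (at x)"
    by (simp add: bounded_linear_imp_has_derivative bounded_linear_vec_nth)
  have mv: "((\<lambda>y. A *v y) has_derivative (\<lambda>h. A *v h)) (at x)"
    by (simp add: bounded_linear_imp_has_derivative)
  then have mv_nth: "((\<lambda>y. (A *v y)$a) has_derivative (\<lambda>h. (A *v h)$a)) (at x)"
    by (rule has_derivative_compose[OF _ bounded_linear_imp_has_derivative[OF bounded_linear_vec_nth]])
  have "((\<lambda>y. y \<bullet> (A *v y)) has_derivative (\<lambda>h. x \<bullet> (A *v h) + h \<bullet> (A *v x))) (at x)"
    by (rule has_derivative_inner[OF has_derivative_ident mv])
  from has_derivative_mult[OF nth has_derivative_diff[OF mv_nth this]]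
  show ?thesis by (simp add: replicator_def replicator_deriv_def algebra_simps)
qed

lemma has_derivative_replicator:
  fixes A :: "real^'n^'n"
  shows "(replicator A has_derivative replicator_deriv A x) (at x)"
  by (subst has_derivative_componentwise_within)
     (auto simp: Basis_vec_def cart_eq_inner_axis[symmetric] intro: has_derivative_replicator_component)

lemma jacobian_replicator_row:
  fixes A :: "real^'n^'n"
  assumes "x$k = 0"
  shows "jacobian (replicator A) (at x) $ k $ m = (if m = k then phi A k x else 0)"
proof -
  have "replicator A differentiable (at x)"
    using has_derivative_replicator by (auto simp: differentiable_def)
  then have "(replicator A has_derivative (*v) (jacobian (replicator A) (at x))) (at x)"
    by (simp add: jacobian_works)
  then have "replicator_deriv A x = (*v) (jacobian (replicator A) (at x))"
    using has_derivative_unique has_derivative_replicator by blast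
  then have "jacobian (replicator A) (at x) $ k $ m = replicator_deriv A x (axis m 1) $ k"
    by (simp add: matrix_vector_mult_basis column_def)
  also have "\<dots> = (if m = k then phi A k x else 0)"
    using assms unfolding phi_def inner_axis' by (simp add: replicator_deriv_def axis_def)
  finally show ?thesis .
qed

lemma is_eigenvalue_if_row_axis:
  fixes M :: "real^'n^'n"
  assumes "\<And>m. M $ k $ m = (if m = k then c else 0)"
  shows "is_eigenvalue M (complex_of_real c)"
proof -
  have "row k (mat (complex_of_real c) - cmat M) = 0"
    by (simp add: row_def vec_eq_iff cmat_def mat_def assms)
  then show ?thesis
    unfolding is_eigenvalue_def by (rule det_zero_row(1))
qed

lemma is_eigenvalue_jacobian_replicator_phi:
  fixes A :: "real^'n^'n"
  assumes "x$k = 0"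
  shows "is_eigenvalue (jacobian (replicator A) (at x)) (complex_of_real (phi A k x))"
  by (rule is_eigenvalue_if_row_axis) (rule jacobian_replicator_row[OF assms])

theorem lemma1:
  fixes R S F :: "real^'n^'n" and i j k :: 'n
    and \<alpha> :: "real \<Rightarrow> real" and lc \<delta> :: real
  assumes "row_stochastic S" and "row_stochastic F"
    and "i \<noteq> j" and "k \<noteq> i" and "k \<noteq> j"
    and "\<delta> > 0" and "0 \<le> lc - \<delta>" and "lc + \<delta> \<le> 1"
    and fixpt: "\<And>l. \<bar>l - lc\<bar> < \<delta> \<Longrightarrow> 0 < \<alpha> l \<and> \<alpha> l < 1 \<and>
        replicator (Rtilde R S F l) (\<alpha> l *\<^sub>R axis i 1 + (1 - \<alpha> l) *\<^sub>R axis j 1) = 0"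
    and stable: "\<And>l. lc - \<delta> < l \<Longrightarrow> l < lc \<Longrightarrow>
        lin_stable (Rtilde R S F l) (\<alpha> l *\<^sub>R axis i 1 + (1 - \<alpha> l) *\<^sub>R axis j 1)"
    and neg: "\<And>l. lc - \<delta> < l \<Longrightarrow> l < lc \<Longrightarrow>
        phi (Rtilde R S F l) k (\<alpha> l *\<^sub>R axis i 1 + (1 - \<alpha> l) *\<^sub>R axis j 1) < 0"
    and pos: "\<And>l. lc < l \<Longrightarrow> l < lc + \<delta> \<Longrightarrow>
        phi (Rtilde R S F l) k (\<alpha> l *\<^sub>R axis i 1 + (1 - \<alpha> l) *\<^sub>R axis j 1) > 0"
  shows "\<forall>l. lc < l \<and> l < lc + \<delta> \<longrightarrow>
     \<not> lin_stable (Rtilde R S F l) (\<alpha> l *\<^sub>R axis i 1 + (1 - \<alpha> l) *\<^sub>R axis j 1) \<and>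
     (\<exists>\<mu>. is_eigenvalue (jacobian (replicator (Rtilde R S F l))
            (at (\<alpha> l *\<^sub>R axis i 1 + (1 - \<alpha> l) *\<^sub>R axis j 1))) \<mu> \<and> Re \<mu> > 0)"
proof (intro allI impI)
  fix l assume l: "lc < l \<and> l < lc + \<delta>"
  define x where "x = \<alpha> l *\<^sub>R axis i 1 + (1 - \<alpha> l) *\<^sub>R (axis j 1 :: real^'n)"
  have "x$k = 0"
    using \<open>k \<noteq> i\<close> \<open>k \<noteq> j\<close> by (simp add: x_def axis_def)
  then have "is_eigenvalue (jacobian (replicator (Rtilde R S F l)) (at x))
      (complex_of_real (phi (Rtilde R S F l) k x))"
    by (rule is_eigenvalue_jacobian_replicator_phi)
  moreover have "phi (Rtilde R S F l) k x > 0"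
    using pos l unfolding x_def by blast
  ultimately show "\<not> lin_stable (Rtilde R S F l) x \<and>
      (\<exists>\<mu>. is_eigenvalue (jacobian (replicator (Rtilde R S F l)) (at x)) \<mu> \<and> Re \<mu> > 0)"
    unfolding lin_stable_def by force
qed

end
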